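(* If $L\subseteq\Sigma^\omega$ is LPBA-recognizable, then there are finitely many Parikh-recognizable languages $U_1,\dots,U_n\subseteq\Sigma^*$ and regular languages $V_1,\dots,V_n\subseteq\Sigma^*$ with $L=\bigcup_{i=1}^nU_iV_i^\omega$.
   Context: For $V\subseteq\Sigma^*$, $V^\omega=\{w_1w_2\cdots\mid w_i\in V\setminus\{\varepsilon\}\}$. A semi-linear set in $\mathbb{N}^d$ (resp. $(\mathbb{N}\cup\{\infty\})^d$) is a finite union of sets $\{b_0+\sum_{j=1}^\ell b_jz_j\mid z_j\in\mathbb{N}\}$ with $b_j\in\mathbb{N}^d$ (resp. $(\mathbb{N}\cup\{\infty\})^d$), with arithmetic $z+\infty=\infty+z=\infty+\infty=\infty$, $z\cdot\infty=\infty\cdot z=\infty$ for $z>0$, $0\cdot\infty=\infty\cdot0=0$. A Parikh automaton (PA) of dimension $d$ is $(Q,\Sigma,q_0,\Delta,F,C)$ with finite $Q$, $q_0\in Q$, $F\subseteq Q$, finite $\Delta\subseteq Q\times\Sigma\times\mathbb{N}^d\times Q$, semi-linear $C\subseteq\mathbb{N}^d$; it accepts a finite word $x_1\cdots x_n$ if there is a run $r_i=(p_{i-1},x_i,\mathbf{v}_i,p_i)\in\Delta$, $p_0=q_0$, with $p_n\in F$ and $\sum_i\mathbf{v}_i\in C$; Parikh-recognizable languages are those accepted by PA. A limit Parikh–Büchi automaton (LPBA) is such a tuple but with $C\subseteq(\mathbb{N}\cup\{\infty\})^d$ semi-linear; a run $r_1r_2\cdots$ on an infinite word ($r_i=(p_{i-1},\alpha_i,\mathbf{v}_i,p_i)$,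 $p_0=q_0$) is accepting if $p_i\in F$ for infinitely many $i$ and $\rho(r)\in C$, where the $j$-th component of $\rho(r)$ is $\infty$ if infinitely many $\mathbf{v}_i$ have nonzero $j$-th component and otherwise is the finite sum of the $j$-th components. $L$ is LPBA-recognizable if it is the set of infinite words with an accepting run of some LPBA. *)

theory Defs
  imports Main "HOL-Library.Extended_Nat"
begin

definition vadd :: "'n::plus list \<Rightarrow> 'n list \<Rightarrow> 'n list" where
  "vadd u v = map2 (+) u v"

definition vsum :: "nat \<Rightarrow> 'n::monoid_add list list \<Rightarrow> 'n list" where
  "vsum d vs = foldr vadd vs (replicate d 0)"

text \<open>Scalar multiplication by a natural number z; for enat this gives
  0 * \<infinity> = 0 and z * \<infinity> = \<infinity> for z > 0.\<close>
definition smult_nat :: "nat \<Rightarrow> 'n::semiring_1 list \<Rightarrow> 'n list" where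
  "smult_nat z b = map (\<lambda>x. of_nat z * x) b"

definition lin_set :: "'n::semiring_1 list \<Rightarrow> 'n list list \<Rightarrow> 'n list set" where
  "lin_set b0 bs = {v. \<exists>zs::nat list. length zs = length bs \<and>
       v = foldr vadd (map2 smult_nat zs bs) b0}"

text \<open>Semi-linear subsets of N^d (resp. (N \<union> {\<infinity>})^d when 'n = enat).\<close>
definition semilinear :: "nat \<Rightarrow> 'n::semiring_1 list set \<Rightarrow> bool" where
  "semilinear d C \<longleftrightarrow> (\<exists>P :: ('n list \<times> 'n list list) list.
      (\<forall>(b0, bs) \<in> set P. length b0 = d \<and> (\<forall>b \<in> set bs. length b = d)) \<and>
      C = (\<Union>(b0, bs) \<in> set P. lin_set b0 bs))"

definition PA_wf :: "'a set \<Rightarrow> nat \<Rightarrow> nat set \<Rightarrow> nat \<Rightarrow>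
    (nat \<times> 'a \<times> 'v list \<times> nat) set \<Rightarrow> nat set \<Rightarrow> bool" where
  "PA_wf \<Sigma> d Q q0 \<Delta> F \<longleftrightarrow> finite Q \<and> q0 \<in> Q \<and> F \<subseteq> Q \<and> finite \<Delta> \<and>
     (\<forall>(p, a, v, q) \<in> \<Delta>. p \<in> Q \<and> a \<in> \<Sigma> \<and> length v = d \<and> q \<in> Q)"

definition PA_accepts :: "nat \<Rightarrow> nat \<Rightarrow> (nat \<times> 'a \<times> nat list \<times> nat) set \<Rightarrow> nat set
    \<Rightarrow> nat list set \<Rightarrow> 'a list \<Rightarrow> bool" where
  "PA_accepts d q0 \<Delta> F C w \<longleftrightarrow> (\<exists>ps vs. length ps = length w + 1 \<and> length vs = length w \<and>
     ps ! 0 = q0 \<and> (\<forall>i < length w. (ps ! i, w ! i, vs ! i, ps ! (i+1)) \<in> \<Delta>) \<and>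
     ps ! length w \<in> F \<and> vsum d vs \<in> C)"

definition parikh_recognizable :: "'a set \<Rightarrow> 'a list set \<Rightarrow> bool" where
  "parikh_recognizable \<Sigma> U \<longleftrightarrow> (\<exists>d Q q0 \<Delta> F C. PA_wf \<Sigma> d Q q0 \<Delta> F \<and> semilinear d C \<and>
     U = {w. PA_accepts d q0 \<Delta> F C w})"

definition NFA_accepts :: "nat \<Rightarrow> (nat \<times> 'a \<times> nat) set \<Rightarrow> nat set \<Rightarrow> 'a list \<Rightarrow> bool" where
  "NFA_accepts q0 \<delta> F w \<longleftrightarrow> (\<exists>ps. length ps = length w + 1 \<and> ps ! 0 = q0 \<and>
     (\<forall>i < length w. (ps ! i, w ! i, ps ! (i+1)) \<in> \<delta>) \<and> ps ! length w \<in> F)"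

definition regular :: "'a set \<Rightarrow> 'a list set \<Rightarrow> bool" where
  "regular \<Sigma> V \<longleftrightarrow> (\<exists>Q q0 \<delta> F. finite Q \<and> q0 \<in> Q \<and> F \<subseteq> Q \<and> finite \<delta> \<and>
     (\<forall>(p, a, q) \<in> \<delta>. p \<in> Q \<and> a \<in> \<Sigma> \<and> q \<in> Q) \<and>
     V = {w. NFA_accepts q0 \<delta> F w})"

type_synonym 'a iword = "nat \<Rightarrow> 'a"

definition iwords :: "'a set \<Rightarrow> 'a iword set" where
  "iwords \<Sigma> = {\<alpha>. \<forall>n. \<alpha> n \<in> \<Sigma>}"

definition rho :: "nat \<Rightarrow> (nat \<Rightarrow> nat list) \<Rightarrow> enat list" where
  "rho d v = map (\<lambda>j. if infinite {i. v i ! j \<noteq> 0} then \<infinity>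
                      else enat (\<Sum>i \<in> {i. v i ! j \<noteq> 0}. v i ! j)) [0..<d]"

definition LPBA_accepts :: "nat \<Rightarrow> nat \<Rightarrow> (nat \<times> 'a \<times> nat list \<times> nat) set \<Rightarrow> nat set
    \<Rightarrow> enat list set \<Rightarrow> 'a iword \<Rightarrow> bool" where
  "LPBA_accepts d q0 \<Delta> F C \<alpha> \<longleftrightarrow> (\<exists>(p :: nat \<Rightarrow> nat) (v :: nat \<Rightarrow> nat list).
     p 0 = q0 \<and> (\<forall>i. (p i, \<alpha> i, v i, p (Suc i)) \<in> \<Delta>) \<and>
     infinite {i. p i \<in> F} \<and> rho d v \<in> C)"

definition LPBA_recognizable :: "'a set \<Rightarrow> 'a iword set \<Rightarrow> bool" where
  "LPBA_recognizable \<Sigma> L \<longleftrightarrow> (\<exists>d Q q0 \<Delta> F C. PA_wf \<Sigma> d Q q0 \<Delta> F \<and> semilinear d C \<and>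
     L = {\<alpha>. LPBA_accepts d q0 \<Delta> F C \<alpha>})"

definition conc :: "'a list \<Rightarrow> 'a iword \<Rightarrow> 'a iword" where
  "conc u \<beta> = (\<lambda>n. if n < length u then u ! n else \<beta> (n - length u))"

definition omega_pow :: "'a list set \<Rightarrow> 'a iword set" where
  "omega_pow V = {\<alpha>. \<exists>ws :: nat \<Rightarrow> 'a list. (\<forall>i. ws i \<in> V \<and> ws i \<noteq> []) \<and>
     (\<forall>i k. k < length (ws i) \<longrightarrow> \<alpha> ((\<Sum>j<i. length (ws j)) + k) = ws i ! k)}"

definition conc_omega :: "'a list set \<Rightarrow> 'a list set \<Rightarrow> 'a iword set" where
  "conc_omega U V = {conc u \<beta> | u \<beta>. u \<in> U \<and> \<beta> \<in> omega_pow V}"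

end

theory Submission
  imports Defs "HOL-Library.Omega_Words_Fun"
begin

(*
  Fix an accepting run of the LPBA. Let J be the set of counters that are incremented infinitely
  often; every other counter stops changing after some position N, and some state q occurs
  infinitely often after N. Cutting the run at the first occurrence of q after N gives a finite
  prefix, accepted by a Parikh automaton with final state q whose semilinear constraint is the
  preimage of C under x \<mapsto> (x with the coordinates in J replaced by \<infinity>); this preimage is
  semilinear. Cutting the remaining run at further occurrences of q, chosen so that every segment
  visits F and increments every counter in J, writes the suffix as an infinite product of words
  from a regular language V_{J,q} of q-loops. Conversely, any such prefix followed by an infinite
  product of such loops has an accepting run, so L is the union of U_{J,q} V_{J,q}^\<omega> over the
  finitely many pairs (J, q).
*)

section \<open>Semilinear sets\<close>

lemma length_vadd [simp]: "length (vadd u v) = min (length u) (length v)"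
  by (simp add: vadd_def)

lemma nth_vadd [simp]: "j < length u \<Longrightarrow> j < length v \<Longrightarrow> vadd u v ! j = u ! j + v ! j"
  by (simp add: vadd_def)

lemma length_vsum: "\<forall>v\<in>set vs. length v = d \<Longrightarrow> length (vsum d vs) = d"
  by (induction vs) (auto simp: vsum_def)

lemma nth_vsum:
  fixes vs :: "'n::comm_monoid_add list list"
  assumes "\<forall>v\<in>set vs. length v = d" and "j < d"
  shows "vsum d vs ! j = (\<Sum>i<length vs. vs ! i ! j)"
  using assms
proof (induction vs)
  case Nil
  then show ?case by (simp add: vsum_def)
next
  case (Cons v vs)
  then have "length (vsum d vs) = d" by (simp add: length_vsum)
  with Cons show ?case
    by (simp add: vsum_def sum.lessThan_Suc_shift del: sum.lessThan_Suc)
qed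

lemma nth_lin_comb:
  fixes b0 :: "'n::semiring_1 list"
  assumes "length b0 = d" and "\<forall>b\<in>set bs. length b = d" and "length zs = length bs"
  shows "length (foldr vadd (map2 smult_nat zs bs) b0) = d \<and>
    (\<forall>j<d. foldr vadd (map2 smult_nat zs bs) b0 ! j =
      b0 ! j + (\<Sum>k<length bs. of_nat (zs ! k) * bs ! k ! j))"
  using assms
proof (induction bs arbitrary: zs)
  case Nil
  then show ?case by simp
next
  case (Cons b bs)
  then obtain z zs' where zs: "zs = z # zs'" by (cases zs) auto
  with Cons have IH: "length (foldr vadd (map2 smult_nat zs' bs) b0) = d \<and>
    (\<forall>j<d. foldr vadd (map2 smult_nat zs' bs) b0 ! j =
      b0 ! j + (\<Sum>k<length bs. of_nat (zs' ! k) * bs ! k ! j))"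
    by auto
  have "length b = d" using Cons by auto
  with IH zs show ?case
    by (auto simp: smult_nat_def sum.lessThan_Suc_shift algebra_simps simp del: sum.lessThan_Suc)
qed

lemma mem_lin_set_iff:
  fixes b0 :: "'n::semiring_1 list"
  assumes "length b0 = d" and "\<forall>b\<in>set bs. length b = d"
  shows "x \<in> lin_set b0 bs \<longleftrightarrow> length x = d \<and>
    (\<exists>z::nat \<Rightarrow> nat. \<forall>j<d. x ! j = b0 ! j + (\<Sum>k<length bs. of_nat (z k) * bs ! k ! j))"
proof
  assume "x \<in> lin_set b0 bs"
  then obtain zs where zs: "length zs = length bs" "x = foldr vadd (map2 smult_nat zs bs) b0"
    unfolding lin_set_def by auto
  with nth_lin_comb[OF assms zs(1)] show "length x = d \<and>
    (\<exists>z::nat \<Rightarrow> nat. \<forall>j<d. x ! j = b0 ! j + (\<Sum>k<length bs. of_nat (z k) * bs ! k ! j))"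
    by (intro conjI exI[of _ "(!) zs"]) auto
next
  assume "length x = d \<and>
    (\<exists>z::nat \<Rightarrow> nat. \<forall>j<d. x ! j = b0 ! j + (\<Sum>k<length bs. of_nat (z k) * bs ! k ! j))"
  then obtain z where "length x = d"
    and "\<forall>j<d. x ! j = b0 ! j + (\<Sum>k<length bs. of_nat (z k) * bs ! k ! j)"
    by auto
  moreover define zs where "zs = map z [0..<length bs]"
  moreover have "length zs = length bs" by (simp add: zs_def)
  ultimately have "length zs = length bs \<and> x = foldr vadd (map2 smult_nat zs bs) b0"
    using nth_lin_comb[OF assms] by (auto intro: nth_equalityI)
  then show "x \<in> lin_set b0 bs" unfolding lin_set_def by blast
qed

lemma semilinear_lin_set:
  "length b0 = d \<Longrightarrow> \<forall>b\<in>set bs. length b = d \<Longrightarrow> semilinear d (lin_set b0 bs)"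
  unfolding semilinear_def by (intro exI[of _ "[(b0, bs)]"]) auto

lemma semilinear_empty: "semilinear d {}"
  unfolding semilinear_def by (intro exI[of _ "[]"]) auto

lemma semilinear_Un: "semilinear d A \<Longrightarrow> semilinear d B \<Longrightarrow> semilinear d (A \<union> B)"
  unfolding semilinear_def by (metis (no_types, lifting) Un_iff set_append UN_Un)

lemma semilinear_UN:
  "finite I \<Longrightarrow> (\<And>i. i \<in> I \<Longrightarrow> semilinear d (C i)) \<Longrightarrow> semilinear d (\<Union>i\<in>I. C i)"
  by (induction I rule: finite_induct) (auto intro: semilinear_Un semilinear_empty)

section \<open>Embedding into extended vectors\<close>

lemma enat_sum_eq_infinity_iff:
  "finite A \<Longrightarrow> (\<Sum>k\<in>A. f k) = (\<infinity>::enat) \<longleftrightarrow> (\<exists>k\<in>A. f k = \<infinity>)"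
  by (induction A rule: finite_induct) (auto simp: plus_eq_infty_iff_enat zero_enat_def)

lemma enat_lin_comb_eq_infinity_iff:
  "(b::enat) + (\<Sum>k<(n::nat). of_nat (z k) * c k) = \<infinity> \<longleftrightarrow> b = \<infinity> \<or> (\<exists>k<n. 0 < z k \<and> c k = \<infinity>)"
proof -
  have "(\<Sum>k<n. of_nat (z k) * c k) = \<infinity> \<longleftrightarrow> (\<exists>k<n. 0 < z k \<and> c k = (\<infinity>::enat))"
    by (auto simp: enat_sum_eq_infinity_iff imult_is_infinity of_nat_eq_enat zero_enat_def)
  then show ?thesis by (simp add: plus_eq_infty_iff_enat)
qed

lemma enat_lin_comb_finite:
  fixes n :: nat
  assumes "b \<noteq> \<infinity>" and "\<forall>k<n. 0 < z k \<longrightarrow> c k \<noteq> \<infinity>"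
  shows "b + (\<Sum>k<n. of_nat (z k) * c k) = enat (the_enat b + (\<Sum>k<n. z k * the_enat (c k)))"
proof -
  have "of_nat (z k) * c k = enat (z k * the_enat (c k))" if "k < n" for k
    using assms(2) that by (cases "c k") (auto simp: of_nat_eq_enat zero_enat_def)
  then have "(\<Sum>k<n. of_nat (z k) * c k) = (\<Sum>k<n. enat (z k * the_enat (c k)))"
    by simp
  also have "\<dots> = enat (\<Sum>k<n. z k * the_enat (c k))"
    by (simp flip: of_nat_eq_enat)
  finally show ?thesis using assms(1) by auto
qed

definition inf_embed :: "nat \<Rightarrow> nat set \<Rightarrow> nat list \<Rightarrow> enat list" where
  "inf_embed d J x = map (\<lambda>j. if j \<in> J then \<infinity> else enat (x ! j)) [0..<d]"

lemma length_inf_embed [simp]: "length (inf_embed d J x) = d"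
  by (simp add: inf_embed_def)

lemma nth_inf_embed [simp]: "j < d \<Longrightarrow> inf_embed d J x ! j = (if j \<in> J then \<infinity> else enat (x ! j))"
  by (simp add: inf_embed_def)

text \<open>\<open>K\<close> stands for the set of periods taken with a positive coefficient.\<close>
definition compatible_support :: "nat \<Rightarrow> nat set \<Rightarrow> enat list \<Rightarrow> enat list list \<Rightarrow> nat set \<Rightarrow> bool" where
  "compatible_support d J b0 bs K \<longleftrightarrow> K \<subseteq> {..<length bs} \<and>
     (\<forall>j<d. j \<in> J \<longleftrightarrow> b0 ! j = \<infinity> \<or> (\<exists>k\<in>K. bs ! k ! j = \<infinity>))"

text \<open>Each period in \<open>K\<close> is used once in the base, so that the remaining coefficients range
  over all of \<open>\<nat>\<close>; each coordinate in \<open>J\<close> gets a free unit period, since its value is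
  invisible after embedding.\<close>
definition fin_base :: "nat \<Rightarrow> nat set \<Rightarrow> enat list \<Rightarrow> enat list list \<Rightarrow> nat set \<Rightarrow> nat list" where
  "fin_base d J b0 bs K = map (\<lambda>j. if j \<in> J then 0 else
     the_enat (b0 ! j) + (\<Sum>k<length bs. if k \<in> K then the_enat (bs ! k ! j) else 0)) [0..<d]"

definition fin_periods :: "nat \<Rightarrow> nat set \<Rightarrow> enat list list \<Rightarrow> nat set \<Rightarrow> nat list list" where
  "fin_periods d J bs K =
     map (\<lambda>k. map (\<lambda>j. if j \<in> J \<or> k \<notin> K then 0 else the_enat (bs ! k ! j)) [0..<d]) [0..<length bs] @
     map (\<lambda>i. map (\<lambda>j. if j = i \<and> i \<in> J then 1 else 0) [0..<d]) [0..<d]"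

lemma nth_fin_lin_comb:
  assumes "j < d"
  shows "fin_base d J b0 bs K ! j + (\<Sum>k<length bs + d. z k * fin_periods d J bs K ! k ! j) =
    (if j \<in> J then z (length bs + j)
     else the_enat (b0 ! j) + (\<Sum>k<length bs. (if k \<in> K then Suc (z k) else 0) * the_enat (bs ! k ! j)))"
proof -
  let ?n = "length bs"
  have split: "(\<Sum>k<?n + d. f k) = (\<Sum>k<?n. f k) + (\<Sum>i<d. f (?n + i))" for f :: "nat \<Rightarrow> nat"
    by (induction d) auto
  have "(\<Sum>i<d. z (?n + i) * fin_periods d J bs K ! (?n + i) ! j) =
      (\<Sum>i<d. if i = j then (if j \<in> J then z (?n + j) else 0) else 0)"
    using assms by (intro sum.cong) (auto simp: fin_periods_def nth_append)
  also have "\<dots> = (if j \<in> J then z (?n + j) else 0)"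
    using assms by simp
  finally show ?thesis
    using assms by (auto simp: split fin_base_def fin_periods_def nth_append sum.distrib[symmetric]
        intro!: sum.cong)
qed

lemma inf_embed_mem_lin_set_iff:
  assumes "length b0 = d" and "\<forall>b\<in>set bs. length b = d"
  shows "inf_embed d J x \<in> lin_set b0 bs \<longleftrightarrow>
    (\<exists>z. compatible_support d J b0 bs {k. k < length bs \<and> 0 < z k} \<and>
      (\<forall>j<d. j \<notin> J \<longrightarrow> x ! j = the_enat (b0 ! j) + (\<Sum>k<length bs. z k * the_enat (bs ! k ! j))))"
proof -
  let ?lc = "\<lambda>z j. b0 ! j + (\<Sum>k<length bs. of_nat (z k) * bs ! k ! j)"
  let ?inf = "\<lambda>z j. b0 ! j = \<infinity> \<or> (\<exists>k<length bs. 0 < z k \<and> bs ! k ! j = \<infinity>)"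
  have coord: "inf_embed d J x ! j = ?lc z j \<longleftrightarrow> (j \<in> J \<longleftrightarrow> ?inf z j) \<and>
      (j \<notin> J \<longrightarrow> x ! j = the_enat (b0 ! j) + (\<Sum>k<length bs. z k * the_enat (bs ! k ! j)))"
    if "j < d" for z j
  proof (cases "?inf z j")
    case True
    then show ?thesis
      using that enat_lin_comb_eq_infinity_iff[where b = "b0 ! j" and n = "length bs" and z = z
          and c = "\<lambda>k. bs ! k ! j"]
      by auto
  next
    case False
    then have "?lc z j = enat (the_enat (b0 ! j) + (\<Sum>k<length bs. z k * the_enat (bs ! k ! j)))"
      by (intro enat_lin_comb_finite) auto
    with False that show ?thesis by auto
  qed
  have "inf_embed d J x \<in> lin_set b0 bs \<longleftrightarrow> (\<exists>z. \<forall>j<d. inf_embed d J x ! j = ?lc z j)"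
    unfolding mem_lin_set_iff[OF assms] by simp
  also have "\<dots> \<longleftrightarrow> (\<exists>z. \<forall>j<d. (j \<in> J \<longleftrightarrow> ?inf z j) \<and>
      (j \<notin> J \<longrightarrow> x ! j = the_enat (b0 ! j) + (\<Sum>k<length bs. z k * the_enat (bs ! k ! j))))"
    by (intro ex_cong1 all_cong1 imp_cong refl coord)
  also have "\<dots> \<longleftrightarrow> (\<exists>z. compatible_support d J b0 bs {k. k < length bs \<and> 0 < z k} \<and>
      (\<forall>j<d. j \<notin> J \<longrightarrow> x ! j = the_enat (b0 ! j) + (\<Sum>k<length bs. z k * the_enat (bs ! k ! j))))"
    unfolding compatible_support_def by (simp add: subset_eq imp_conjR all_conj_distrib)
  finally show ?thesis .
qed
lemma mem_lin_set_fin_iff: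
  assumes "K \<subseteq> {..<length bs}"
  shows "x \<in> lin_set (fin_base d J b0 bs K) (fin_periods d J bs K) \<longleftrightarrow> length x = d \<and>
    (\<exists>z. {k. k < length bs \<and> 0 < z k} = K \<and>
      (\<forall>j<d. j \<notin> J \<longrightarrow> x ! j = the_enat (b0 ! j) + (\<Sum>k<length bs. z k * the_enat (bs ! k ! j))))"
    (is "_ \<longleftrightarrow> _ \<and> (\<exists>z. ?supp z = K \<and> ?fin z)")
proof -
  let ?n = "length bs"
  let ?comb = "\<lambda>z' j. fin_base d J b0 bs K ! j + (\<Sum>k<?n + d. z' k * fin_periods d J bs K ! k ! j)"
  have lens: "length (fin_base d J b0 bs K) = d" "\<forall>b\<in>set (fin_periods d J bs K). length b = d"
    "length (fin_periods d J bs K) = ?n + d"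
    by (auto simp: fin_base_def fin_periods_def)
  have "(\<exists>z'. \<forall>j<d. x ! j = ?comb z' j) \<longleftrightarrow> (\<exists>z. ?supp z = K \<and> ?fin z)"
  proof
    assume "\<exists>z'. \<forall>j<d. x ! j = ?comb z' j"
    then obtain z' where z': "\<forall>j<d. x ! j = ?comb z' j" by blast
    define z where "z k = (if k \<in> K then Suc (z' k) else 0)" for k
    have "?supp z = K" using assms by (auto simp: z_def)
    moreover have "?fin z"
      using z' by (simp add: nth_fin_lin_comb z_def)
    ultimately show "\<exists>z. ?supp z = K \<and> ?fin z" by blast
  next
    assume "\<exists>z. ?supp z = K \<and> ?fin z"
    then obtain z where z: "?supp z = K" "?fin z" by blast
    define z' where "z' k = (if k < ?n then z k - 1 else x ! (k - ?n))" for k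
    have "(if k \<in> K then Suc (z' k) else 0) = z k" if "k < ?n" for k
      using z(1) that by (auto simp: z'_def)
    then have "(\<Sum>k<?n. (if k \<in> K then Suc (z' k) else 0) * c k) = (\<Sum>k<?n. z k * c k)" for c
      by (intro sum.cong) auto
    moreover have "z' (?n + j) = x ! j" for j by (simp add: z'_def)
    ultimately have "\<forall>j<d. x ! j = ?comb z' j"
      using z(2) by (simp add: nth_fin_lin_comb)
    then show "\<exists>z'. \<forall>j<d. x ! j = ?comb z' j" by blast
  qed
  then show ?thesis
    unfolding mem_lin_set_iff[OF lens(1,2)] lens(3) by simp
qed

lemma inf_embed_preimage_lin_set:
  assumes "length b0 = d" and "\<forall>b\<in>set bs. length b = d"
  shows "{x. length x = d \<and> inf_embed d J x \<in> lin_set b0 bs} =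
    (\<Union>K\<in>{K. compatible_support d J b0 bs K}. lin_set (fin_base d J b0 bs K) (fin_periods d J bs K))"
    (is "?pre = ?fin")
proof (intro set_eqI iffI)
  fix x assume "x \<in> ?pre"
  then obtain z where "length x = d"
    and compat: "compatible_support d J b0 bs {k. k < length bs \<and> 0 < z k}"
    and "\<forall>j<d. j \<notin> J \<longrightarrow> x ! j = the_enat (b0 ! j) + (\<Sum>k<length bs. z k * the_enat (bs ! k ! j))"
    using inf_embed_mem_lin_set_iff[OF assms] by blast
  then have "x \<in> lin_set (fin_base d J b0 bs {k. k < length bs \<and> 0 < z k})
      (fin_periods d J bs {k. k < length bs \<and> 0 < z k})"
    by (subst mem_lin_set_fin_iff) auto
  with compat show "x \<in> ?fin" by blast
next
  fix x assume "x \<in> ?fin"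
  then obtain K where compat: "compatible_support d J b0 bs K"
    and "x \<in> lin_set (fin_base d J b0 bs K) (fin_periods d J bs K)"
    by blast
  moreover have "K \<subseteq> {..<length bs}"
    using compat by (simp add: compatible_support_def)
  ultimately obtain z where "length x = d" "{k. k < length bs \<and> 0 < z k} = K"
    "\<forall>j<d. j \<notin> J \<longrightarrow> x ! j = the_enat (b0 ! j) + (\<Sum>k<length bs. z k * the_enat (bs ! k ! j))"
    using mem_lin_set_fin_iff by blast
  with compat show "x \<in> ?pre"
    using inf_embed_mem_lin_set_iff[OF assms] by blast
qed

lemma semilinear_inf_embed_preimage:
  assumes "semilinear d C"
  shows "semilinear d {x. length x = d \<and> inf_embed d J x \<in> C}"
proof -
  obtain P :: "(enat list \<times> enat list list) list" where
    P: "\<forall>p\<in>set P. length (fst p) = d \<and> (\<forall>b\<in>set (snd p). length b = d)"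
    and C: "C = (\<Union>p\<in>set P. lin_set (fst p) (snd p))"
    using assms unfolding semilinear_def split_def by blast
  have preimage: "{x. length x = d \<and> inf_embed d J x \<in> lin_set (fst p) (snd p)} =
      (\<Union>K\<in>{K. compatible_support d J (fst p) (snd p) K}.
        lin_set (fin_base d J (fst p) (snd p) K) (fin_periods d J (snd p) K))" if "p \<in> set P" for p
    using P that by (intro inf_embed_preimage_lin_set) auto
  have "{x. length x = d \<and> inf_embed d J x \<in> C} =
      (\<Union>p\<in>set P. {x. length x = d \<and> inf_embed d J x \<in> lin_set (fst p) (snd p)})"
    unfolding C by blast
  also have "\<dots> = (\<Union>p\<in>set P. \<Union>K\<in>{K. compatible_support d J (fst p) (snd p) K}.
      lin_set (fin_base d J (fst p) (snd p) K) (fin_periods d J (snd p) K))"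
    by (rule SUP_cong[OF refl preimage])
  finally show ?thesis
  proof (simp only:, intro semilinear_UN semilinear_lin_set)
    fix p :: "enat list \<times> enat list list"
    show "finite {K. compatible_support d J (fst p) (snd p) K}"
      by (rule finite_subset[of _ "Pow {..<length (snd p)}"]) (auto simp: compatible_support_def)
  qed (auto simp: fin_base_def fin_periods_def)
qed

definition prefix_lang :: "nat \<Rightarrow> nat \<Rightarrow> (nat \<times> 'a \<times> nat list \<times> nat) set \<Rightarrow> enat list set \<Rightarrow>
    nat set \<Rightarrow> nat \<Rightarrow> 'a list set" where
  "prefix_lang d q0 \<Delta> C J q = {u. PA_accepts d q0 \<Delta> {q} {x. length x = d \<and> inf_embed d J x \<in> C} u}"

lemma prefix_lang_parikh_recognizable:
  assumes "PA_wf \<Sigma> d Q q0 \<Delta> F" and "semilinear d C" and "q \<in> Q"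
  shows "parikh_recognizable \<Sigma> (prefix_lang d q0 \<Delta> C J q)"
proof -
  have "PA_wf \<Sigma> d Q q0 \<Delta> {q}"
    using assms(1,3) by (simp add: PA_wf_def)
  with semilinear_inf_embed_preimage[OF assms(2)] show ?thesis
    unfolding parikh_recognizable_def prefix_lang_def by blast
qed

section \<open>Regularity of loop languages\<close>

definition nfa_accepts :: "'q \<Rightarrow> ('q \<times> 'a \<times> 'q) set \<Rightarrow> 'q set \<Rightarrow> 'a list \<Rightarrow> bool" where
  "nfa_accepts q0 \<delta> F w \<longleftrightarrow>
     (\<exists>p. p 0 = q0 \<and> (\<forall>i<length w. (p i, w ! i, p (Suc i)) \<in> \<delta>) \<and> p (length w) \<in> F)"

lemma NFA_accepts_iff_nfa_accepts: "NFA_accepts q0 \<delta> F w \<longleftrightarrow> nfa_accepts q0 \<delta> F w"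
proof
  assume "NFA_accepts q0 \<delta> F w"
  then obtain ps where "ps ! 0 = q0" "\<forall>i<length w. (ps ! i, w ! i, ps ! (i + 1)) \<in> \<delta>"
    "ps ! length w \<in> F"
    unfolding NFA_accepts_def by blast
  then show "nfa_accepts q0 \<delta> F w"
    unfolding nfa_accepts_def by (intro exI[of _ "(!) ps"]) auto
next
  assume "nfa_accepts q0 \<delta> F w"
  then obtain p where "p 0 = q0" "\<forall>i<length w. (p i, w ! i, p (Suc i)) \<in> \<delta>" "p (length w) \<in> F"
    unfolding nfa_accepts_def by blast
  then show "NFA_accepts q0 \<delta> F w"
    unfolding NFA_accepts_def
    by (intro exI[of _ "map p [0..<Suc (length w)]"]) (auto simp del: upt_Suc)
qed

lemma nfa_accepts_rename_states:
  assumes inj: "inj_on f Q" and \<delta>: "\<forall>(p, a, q)\<in>\<delta>. p \<in> Q \<and> q \<in> Q"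
    and "q0 \<in> Q" and "F \<subseteq> Q"
  shows "nfa_accepts (f q0) ((\<lambda>(p, a, q). (f p, a, f q)) ` \<delta>) (f ` F) w \<longleftrightarrow> nfa_accepts q0 \<delta> F w"
proof
  let ?g = "inv_into Q f"
  assume "nfa_accepts (f q0) ((\<lambda>(p, a, q). (f p, a, f q)) ` \<delta>) (f ` F) w"
  then obtain p where p: "p 0 = f q0" "\<forall>i<length w. (p i, w ! i, p (Suc i)) \<in> (\<lambda>(p, a, q). (f p, a, f q)) ` \<delta>"
    "p (length w) \<in> f ` F"
    unfolding nfa_accepts_def by blast
  have "(?g (p i), w ! i, ?g (p (Suc i))) \<in> \<delta>" if i: "i < length w" for i
  proof -
    obtain x y where "(x, w ! i, y) \<in> \<delta>" "p i = f x" "p (Suc i) = f y"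
      using p(2) i by fastforce
    with \<delta> inj show ?thesis by auto
  qed
  moreover have "?g (p 0) = q0" "?g (p (length w)) \<in> F"
    using p(1,3) inj assms(3,4) by auto
  ultimately show "nfa_accepts q0 \<delta> F w"
    unfolding nfa_accepts_def by (intro exI[of _ "?g \<circ> p"]) auto
next
  assume "nfa_accepts q0 \<delta> F w"
  then obtain p where "p 0 = q0" "\<forall>i<length w. (p i, w ! i, p (Suc i)) \<in> \<delta>" "p (length w) \<in> F"
    unfolding nfa_accepts_def by blast
  then show "nfa_accepts (f q0) ((\<lambda>(p, a, q). (f p, a, f q)) ` \<delta>) (f ` F) w"
    unfolding nfa_accepts_def by (intro exI[of _ "f \<circ> p"]) (auto intro: rev_image_eqI)
qed

lemma regular_nfa_accepts:
  fixes Q :: "'q set"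
  assumes "finite Q" "q0 \<in> Q" "F \<subseteq> Q" "finite \<delta>" and \<delta>: "\<forall>(p, a, q)\<in>\<delta>. p \<in> Q \<and> a \<in> \<Sigma> \<and> q \<in> Q"
  shows "regular \<Sigma> {w. nfa_accepts q0 \<delta> F w}"
proof -
  obtain f :: "'q \<Rightarrow> nat" where inj: "inj_on f Q"
    using finite_imp_inj_to_nat_seg[OF assms(1)] by blast
  let ?\<delta> = "(\<lambda>(p, a, q). (f p, a, f q)) ` \<delta>"
  have "{w. nfa_accepts q0 \<delta> F w} = {w. NFA_accepts (f q0) ?\<delta> (f ` F) w}"
  proof -
    have "\<forall>(p, a, q)\<in>\<delta>. p \<in> Q \<and> q \<in> Q" using \<delta> by auto
    from nfa_accepts_rename_states[OF inj this assms(2,3)] show ?thesis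
      by (simp add: NFA_accepts_iff_nfa_accepts)
  qed
  moreover have "\<forall>(p, a, q)\<in>?\<delta>. p \<in> f ` Q \<and> a \<in> \<Sigma> \<and> q \<in> f ` Q"
    using \<delta> by auto
  ultimately show ?thesis
    unfolding regular_def using assms(1-4)
    by (intro exI[of _ "f ` Q"] exI[of _ "f q0"] exI[of _ ?\<delta>] exI[of _ "f ` F"]) auto
qed

definition supported_in :: "nat \<Rightarrow> nat set \<Rightarrow> nat list \<Rightarrow> bool" where
  "supported_in d J v \<longleftrightarrow> (\<forall>j<d. j \<notin> J \<longrightarrow> v ! j = 0)"

definition loop_lang ::
    "nat \<Rightarrow> (nat \<times> 'a \<times> nat list \<times> nat) set \<Rightarrow> nat set \<Rightarrow> nat set \<Rightarrow> nat \<Rightarrow> 'a list set" where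
  "loop_lang d \<Delta> F J q = {w. \<exists>p v. p 0 = q \<and> p (length w) = q \<and>
     (\<forall>i<length w. (p i, w ! i, v i, p (Suc i)) \<in> \<Delta> \<and> supported_in d J (v i)) \<and>
     (\<exists>t<length w. p t \<in> F) \<and> (\<forall>j\<in>J. \<exists>t<length w. v t ! j \<noteq> 0)}"

text \<open>The NFA for \<^const>\<open>loop_lang\<close> records in its second component the counters \<open>j < d\<close>
  seen nonzero so far, and the extra mark \<open>d\<close> once \<open>F\<close> has been visited.\<close>
definition loop_marks :: "nat \<Rightarrow> nat set \<Rightarrow> nat \<Rightarrow> nat list \<Rightarrow> nat set" where
  "loop_marks d F p v = {j. j < d \<and> v ! j \<noteq> 0} \<union> (if p \<in> F then {d} else {})"

definition loop_nfa :: "nat \<Rightarrow> (nat \<times> 'a \<times> nat list \<times> nat) set \<Rightarrow> nat set \<Rightarrow> nat set \<Rightarrow>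
    ((nat \<times> nat set) \<times> 'a \<times> (nat \<times> nat set)) set" where
  "loop_nfa d \<Delta> F J = {((p, S), a, (p', S \<union> loop_marks d F p v)) | p S a v p'.
     (p, a, v, p') \<in> \<Delta> \<and> supported_in d J v \<and> S \<subseteq> {..d}}"

definition loop_nfa_final :: "nat \<Rightarrow> nat set \<Rightarrow> nat \<Rightarrow> (nat \<times> nat set) set" where
  "loop_nfa_final d J q = {(q, S) | S. S \<subseteq> {..d} \<and> insert d J \<subseteq> S}"

lemma loop_marks_bounded: "loop_marks d F p v \<subseteq> {..d}"
  by (auto simp: loop_marks_def)

lemma loop_lang_imp_nfa_accepts:
  assumes "J \<subseteq> {..<d}" and "w \<in> loop_lang d \<Delta> F J q"
  shows "nfa_accepts (q, {}) (loop_nfa d \<Delta> F J) (loop_nfa_final d J q) w"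
proof -
  obtain p v where p: "p 0 = q" "p (length w) = q"
    "\<forall>i<length w. (p i, w ! i, v i, p (Suc i)) \<in> \<Delta> \<and> supported_in d J (v i)"
    "\<exists>t<length w. p t \<in> F" "\<forall>j\<in>J. \<exists>t<length w. v t ! j \<noteq> 0"
    using assms(2) unfolding loop_lang_def by blast
  define S where "S i = (\<Union>t<i. loop_marks d F (p t) (v t))" for i
  have S_bounded: "S i \<subseteq> {..d}" for i
    using loop_marks_bounded unfolding S_def by blast
  have "((p i, S i), w ! i, (p (Suc i), S (Suc i))) \<in> loop_nfa d \<Delta> F J" if "i < length w" for i
    unfolding loop_nfa_def using p(3) that S_bounded by (fastforce simp: S_def lessThan_Suc)
  moreover have "insert d J \<subseteq> S (length w)"
    using p(4,5) assms(1) by (fastforce simp: S_def loop_marks_def)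
  ultimately show ?thesis
    unfolding nfa_accepts_def loop_nfa_final_def using p(1,2) S_bounded
    by (intro exI[of _ "\<lambda>i. (p i, S i)"]) (auto simp: S_def)
qed

lemma nfa_accepts_imp_loop_lang:
  assumes "J \<subseteq> {..<d}" and "nfa_accepts (q, {}) (loop_nfa d \<Delta> F J) (loop_nfa_final d J q) w"
  shows "w \<in> loop_lang d \<Delta> F J q"
proof -
  obtain P where P: "P 0 = (q, {})" "\<forall>i<length w. (P i, w ! i, P (Suc i)) \<in> loop_nfa d \<Delta> F J"
    "P (length w) \<in> loop_nfa_final d J q"
    using assms(2) unfolding nfa_accepts_def by blast
  let ?p = "fst \<circ> P"
  have "\<forall>i<length w. \<exists>v. (?p i, w ! i, v, ?p (Suc i)) \<in> \<Delta> \<and> supported_in d J v \<and>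
      snd (P (Suc i)) = snd (P i) \<union> loop_marks d F (?p i) v"
    using P(2) unfolding loop_nfa_def by fastforce
  then obtain v where v: "\<forall>i<length w. (?p i, w ! i, v i, ?p (Suc i)) \<in> \<Delta> \<and> supported_in d J (v i) \<and>
      snd (P (Suc i)) = snd (P i) \<union> loop_marks d F (?p i) (v i)"
    by metis
  have marks: "snd (P i) = (\<Union>t<i. loop_marks d F (?p t) (v t))" if "i \<le> length w" for i
    using that by (induction i) (auto simp: P(1) v lessThan_Suc)
  have "insert d J \<subseteq> (\<Union>t<length w. loop_marks d F (?p t) (v t))"
    using P(3) marks[of "length w"] by (auto simp: loop_nfa_final_def)
  then have "\<exists>t<length w. ?p t \<in> F" "\<forall>j\<in>J. \<exists>t<length w. v t ! j \<noteq> 0"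
    using assms(1) by (fastforce simp: loop_marks_def split: if_splits)+
  moreover have "?p 0 = q" "?p (length w) = q"
    using P(1,3) by (auto simp: loop_nfa_final_def)
  ultimately show ?thesis
    unfolding loop_lang_def using v by blast
qed

lemma loop_lang_regular:
  assumes wf: "PA_wf \<Sigma> d Q q0 \<Delta> F" and J: "J \<subseteq> {..<d}" and "q \<in> Q"
  shows "regular \<Sigma> (loop_lang d \<Delta> F J q)"
proof -
  have \<Delta>: "finite Q" "finite \<Delta>" "\<forall>(p, a, v, q) \<in> \<Delta>. p \<in> Q \<and> a \<in> \<Sigma> \<and> q \<in> Q"
    using wf by (auto simp: PA_wf_def)
  have "loop_nfa d \<Delta> F J \<subseteq>
      (\<lambda>((p, a, v, p'), S). ((p, S), a, (p', S \<union> loop_marks d F p v))) ` (\<Delta> \<times> Pow {..d})"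
  proof
    fix t assume "t \<in> loop_nfa d \<Delta> F J"
    then obtain p S a v p' where "t = ((p, S), a, (p', S \<union> loop_marks d F p v))"
      "(p, a, v, p') \<in> \<Delta>" "S \<subseteq> {..d}"
      unfolding loop_nfa_def by blast
    then show "t \<in> (\<lambda>((p, a, v, p'), S). ((p, S), a, (p', S \<union> loop_marks d F p v))) ` (\<Delta> \<times> Pow {..d})"
      by (intro rev_image_eqI[of "((p, a, v, p'), S)"]) auto
  qed
  then have "finite (loop_nfa d \<Delta> F J)"
    by (rule finite_subset) (use \<Delta> in auto)
  moreover have "\<forall>(P, a, P')\<in>loop_nfa d \<Delta> F J. P \<in> Q \<times> Pow {..d} \<and> a \<in> \<Sigma> \<and> P' \<in> Q \<times> Pow {..d}"
    using \<Delta>(3) loop_marks_bounded unfolding loop_nfa_def by fast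
  ultimately have "regular \<Sigma> {w. nfa_accepts (q, {}) (loop_nfa d \<Delta> F J) (loop_nfa_final d J q) w}"
    using \<Delta>(1) assms(3) by (intro regular_nfa_accepts) (auto simp: loop_nfa_final_def)
  moreover have "loop_lang d \<Delta> F J q =
      {w. nfa_accepts (q, {}) (loop_nfa d \<Delta> F J) (loop_nfa_final d J q) w}"
    using loop_lang_imp_nfa_accepts[OF J] nfa_accepts_imp_loop_lang[OF J] by blast
  ultimately show ?thesis by simp
qed

section \<open>Infinite words cut into segments\<close>

lemma mem_conc_omega_iff: "\<alpha> \<in> conc_omega U V \<longleftrightarrow> (\<exists>u \<beta>. \<alpha> = u \<frown> \<beta> \<and> u \<in> U \<and> \<beta> \<in> omega_pow V)"
  by (simp add: conc_omega_def Defs.conc_def Omega_Words_Fun.conc_def)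

lemma omega_pow_iff_idx_sequence:
  "\<beta> \<in> omega_pow V \<longleftrightarrow> (\<exists>idx. idx_sequence idx \<and> (\<forall>i. \<beta> [idx i \<rightarrow> idx (Suc i)] \<in> V))"
proof
  assume "\<beta> \<in> omega_pow V"
  then obtain ws :: "nat \<Rightarrow> 'a list" where ws: "\<forall>i. ws i \<in> V \<and> ws i \<noteq> []"
    and \<beta>: "\<forall>i k. k < length (ws i) \<longrightarrow> \<beta> ((\<Sum>j<i. length (ws j)) + k) = ws i ! k"
    unfolding omega_pow_def by blast
  define idx where "idx i = (\<Sum>j<i. length (ws j))" for i
  have "idx_sequence idx"
    using ws by (simp add: idx_sequence_def idx_def)
  moreover have "\<beta> [idx i \<rightarrow> idx (Suc i)] = ws i" for i
  proof (rule nth_equalityI)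
    show "length (\<beta> [idx i \<rightarrow> idx (Suc i)]) = length (ws i)"
      by (simp add: idx_def)
    show "\<beta> [idx i \<rightarrow> idx (Suc i)] ! k = ws i ! k" if "k < length (\<beta> [idx i \<rightarrow> idx (Suc i)])" for k
      using that \<beta> by (simp add: idx_def)
  qed
  ultimately show "\<exists>idx. idx_sequence idx \<and> (\<forall>i. \<beta> [idx i \<rightarrow> idx (Suc i)] \<in> V)"
    using ws by auto
next
  assume "\<exists>idx. idx_sequence idx \<and> (\<forall>i. \<beta> [idx i \<rightarrow> idx (Suc i)] \<in> V)"
  then obtain idx where idx: "idx_sequence idx" and seg: "\<forall>i. \<beta> [idx i \<rightarrow> idx (Suc i)] \<in> V"
    by blast
  define ws where "ws i = \<beta> [idx i \<rightarrow> idx (Suc i)]" for i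
  have idx_less: "idx i < idx (Suc i)" for i
    using idx by (simp add: idx_sequence_def)
  have pos: "(\<Sum>j<i. length (ws j)) = idx i" for i
  proof (induction i)
    case 0
    then show ?case using idx by (simp add: idx_sequence_def)
  next
    case (Suc i)
    then show ?case using idx_less[of i] by (simp add: ws_def)
  qed
  have "\<forall>i. ws i \<in> V \<and> ws i \<noteq> []"
    using seg idx_less by (simp add: ws_def not_le)
  moreover have "\<forall>i k. k < length (ws i) \<longrightarrow> \<beta> ((\<Sum>j<i. length (ws j)) + k) = ws i ! k"
    unfolding pos by (simp add: ws_def)
  ultimately show "\<beta> \<in> omega_pow V"
    unfolding omega_pow_def by blast
qed

lemma idx_sequence_infinite:
  assumes "idx_sequence idx" and "\<forall>i. \<exists>n\<in>{idx i..<idx (Suc i)}. n \<in> A"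
  shows "infinite A"
  unfolding infinite_nat_iff_unbounded_le
proof
  fix m
  have "m \<le> idx m"
    using assms(1) by (simp add: idx_sequence_def strict_mono_Suc_iff[symmetric] strict_mono_imp_increasing)
  moreover obtain n where "n \<in> {idx m..<idx (Suc m)}" "n \<in> A"
    using assms(2) by blast
  ultimately show "\<exists>n\<ge>m. n \<in> A" by (intro exI[of _ n]) auto
qed

lemma idx_sequence_segmentE:
  assumes "idx_sequence idx"
  obtains i k where "n = idx i + k" and "k < idx (Suc i) - idx i"
proof -
  obtain i where "n \<in> {idx i..<idx (Suc i)}"
    using idx_sequence_interval[OF assms] by blast
  then show ?thesis by (intro that[of i "n - idx i"]) auto
qed

lemma merge_shift:
  assumes "idx_sequence idx" and "k < idx (Suc i) - idx i"
  shows "merge (\<lambda>i n. f i (n - idx i)) idx (idx i + k) = f i k"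
  using assms by (subst merge[where i = i]) auto

lemma merge_shift_Suc:
  assumes idx: "idx_sequence idx" and k: "k < idx (Suc i) - idx i"
    and glue: "f i (idx (Suc i) - idx i) = f (Suc i) 0"
  shows "merge (\<lambda>i n. f i (n - idx i)) idx (Suc (idx i + k)) = f i (Suc k)"
proof (cases "Suc k < idx (Suc i) - idx i")
  case True
  then show ?thesis using merge_shift[OF idx True] by simp
next
  case False
  then have "Suc (idx i + k) = idx (Suc i) + 0" and "Suc k = idx (Suc i) - idx i"
    using k by auto
  moreover have "0 < idx (Suc (Suc i)) - idx (Suc i)"
    using idx by (simp add: idx_sequence_def)
  ultimately show ?thesis
    using merge_shift[OF idx, of 0 "Suc i" f] glue by simp
qed

lemma infinite_conc:
  assumes "infinite {n. R (w n)}"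
  shows "infinite {n. R ((u \<frown> w) n)}"
proof -
  have "(+) (length u) ` {n. R (w n)} \<subseteq> {n. R ((u \<frown> w) n)}"
    by auto
  moreover have "infinite ((+) (length u) ` {n. R (w n)})"
    using assms finite_imageD inj_on_add by blast
  ultimately show ?thesis
    using infinite_super by blast
qed

lemma infinite_segmentation:
  fixes A :: "nat set" and \<B> :: "nat set set"
  assumes A: "infinite A" and \<B>: "finite \<B>" "\<forall>B\<in>\<B>. infinite B" and "a \<in> A"
  obtains s where "s 0 = a"
    and "\<forall>i. s i \<in> A \<and> s i < s (Suc i) \<and> (\<forall>B\<in>\<B>. \<exists>t\<in>B. s i \<le> t \<and> t < s (Suc i))"
proof -
  have next_point: "\<exists>y. y \<in> A \<and> x < y \<and> (\<forall>B\<in>\<B>. \<exists>t\<in>B. x \<le> t \<and> t < y)" for x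
  proof -
    have "\<forall>B\<in>\<B>. \<exists>t\<in>B. x \<le> t"
      using \<B>(2) unfolding infinite_nat_iff_unbounded_le by blast
    then obtain t where t: "\<forall>B\<in>\<B>. t B \<in> B \<and> x \<le> t B" by metis
    obtain k where k: "t ` \<B> \<subseteq> {..<k}"
      using finite_nat_bounded[OF finite_imageI[OF \<B>(1)]] by blast
    obtain y where y: "y \<in> A" "x + k < y"
      using A by (auto simp: infinite_nat_iff_unbounded)
    have "\<exists>t\<in>B. x \<le> t \<and> t < y" if "B \<in> \<B>" for B
      using t k y(2) that by (intro bexI[of _ "t B"]) auto
    with y show ?thesis by auto
  qed
  have "\<exists>s. \<forall>n. (s n \<in> A \<and> (n = 0 \<longrightarrow> s n = a)) \<and>
      s n < s (Suc n) \<and> (\<forall>B\<in>\<B>. \<exists>t\<in>B. s n \<le> t \<and> t < s (Suc n))"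
  proof (rule dependent_nat_choice)
    show "\<exists>x. x \<in> A \<and> (0 = 0 \<longrightarrow> x = a)" using assms(4) by blast
  next
    fix x n
    show "\<exists>y. (y \<in> A \<and> (Suc n = 0 \<longrightarrow> y = a)) \<and> x < y \<and> (\<forall>B\<in>\<B>. \<exists>t\<in>B. x \<le> t \<and> t < y)"
      using next_point[of x] by simp
  qed
  then obtain s where s: "\<forall>n. (s n \<in> A \<and> (n = 0 \<longrightarrow> s n = a)) \<and>
      s n < s (Suc n) \<and> (\<forall>B\<in>\<B>. \<exists>t\<in>B. s n \<le> t \<and> t < s (Suc n))"
    by blast
  show ?thesis
  proof (rule that)
    show "s 0 = a" using s by blast
  qed (use s in blast)
qed

section \<open>From runs to loops and back\<close>

lemma loop_segments_run:
  assumes idx: "idx_sequence idx" and seg: "\<forall>i. \<beta> [idx i \<rightarrow> idx (Suc i)] \<in> loop_lang d \<Delta> F J q"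
  obtains P V where "P 0 = q" and "\<forall>n. (P n, \<beta> n, V n, P (Suc n)) \<in> \<Delta> \<and> supported_in d J (V n)"
    and "infinite {n. P n \<in> F}" and "\<forall>j\<in>J. infinite {n. V n ! j \<noteq> 0}"
proof -
  let ?len = "\<lambda>i. idx (Suc i) - idx i"
  have "\<exists>p v. p 0 = q \<and> p (?len i) = q \<and>
      (\<forall>k<?len i. (p k, \<beta> (idx i + k), v k, p (Suc k)) \<in> \<Delta> \<and> supported_in d J (v k)) \<and>
      (\<exists>t<?len i. p t \<in> F) \<and> (\<forall>j\<in>J. \<exists>t<?len i. v t ! j \<noteq> 0)" for i
    using seg[rule_format, of i] by (simp add: loop_lang_def)
  then obtain p v where pv: "\<forall>i. p i 0 = q \<and> p i (?len i) = q \<and>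
      (\<forall>k<?len i. (p i k, \<beta> (idx i + k), v i k, p i (Suc k)) \<in> \<Delta> \<and> supported_in d J (v i k)) \<and>
      (\<exists>t<?len i. p i t \<in> F) \<and> (\<forall>j\<in>J. \<exists>t<?len i. v i t ! j \<noteq> 0)"
    by metis
  then have ends: "p i 0 = q" "p i (?len i) = q"
    and trans: "k < ?len i \<Longrightarrow> (p i k, \<beta> (idx i + k), v i k, p i (Suc k)) \<in> \<Delta> \<and> supported_in d J (v i k)"
    and visit_F: "\<exists>t<?len i. p i t \<in> F" and visit_J: "j \<in> J \<Longrightarrow> \<exists>t<?len i. v i t ! j \<noteq> 0"
    for i k j
    by simp_all
  define P where "P = merge (\<lambda>i n. p i (n - idx i)) idx"
  define V where "V = merge (\<lambda>i n. v i (n - idx i)) idx"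
  have at: "P (idx i + k) = p i k" "P (Suc (idx i + k)) = p i (Suc k)" "V (idx i + k) = v i k"
    if "k < ?len i" for i k
    using merge_shift[OF idx that, of p] merge_shift_Suc[OF idx that, of p] merge_shift[OF idx that, of v] ends
    by (simp_all add: P_def V_def)
  have "idx 0 = 0" and "idx 0 < idx (Suc 0)"
    using idx idx_sequence_idx[OF idx, of 0] by (simp_all add: idx_sequence_def)
  then have P0: "P 0 = q"
    using at(1)[of 0 0] ends by simp
  have step: "(P n, \<beta> n, V n, P (Suc n)) \<in> \<Delta> \<and> supported_in d J (V n)" for n
  proof -
    obtain i k where n: "n = idx i + k" and k: "k < ?len i"
      using idx by (rule idx_sequence_segmentE)
    then show ?thesis
      using trans[OF k] at[OF k] by simp
  qed
  have inf_F: "infinite {n. P n \<in> F}"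
  proof (intro idx_sequence_infinite[OF idx] allI)
    fix i
    obtain t where "t < ?len i" "p i t \<in> F" using visit_F by blast
    then show "\<exists>n\<in>{idx i..<idx (Suc i)}. n \<in> {n. P n \<in> F}"
      using at(1) by (intro bexI[of _ "idx i + t"]) auto
  qed
  have inf_J: "infinite {n. V n ! j \<noteq> 0}" if j: "j \<in> J" for j
  proof (intro idx_sequence_infinite[OF idx] allI)
    fix i
    obtain t where "t < ?len i" "v i t ! j \<noteq> 0" using visit_J[OF j] by blast
    then show "\<exists>n\<in>{idx i..<idx (Suc i)}. n \<in> {n. V n ! j \<noteq> 0}"
      using at(3) by (intro bexI[of _ "idx i + t"]) auto
  qed
  show ?thesis
    using step inf_J by (intro that[OF P0 _ inf_F]) auto
qed

lemma run_conc:
  assumes "length ps = Suc (length u)" and "length vs = length u"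
    and "\<forall>i<length u. (ps ! i, u ! i, vs ! i, ps ! Suc i) \<in> \<Delta>" and "ps ! length u = P 0"
    and "\<forall>n. (P n, \<beta> n, V n, P (Suc n)) \<in> \<Delta>"
  shows "((butlast ps \<frown> P) n, (u \<frown> \<beta>) n, (vs \<frown> V) n, (butlast ps \<frown> P) (Suc n)) \<in> \<Delta>"
proof (cases "n < length u")
  case True
  then have "(butlast ps \<frown> P) (Suc n) = ps ! Suc n"
    using assms(1,4) by (auto simp: nth_butlast less_Suc_eq[symmetric] dest: Suc_lessI)
  with True show ?thesis
    using assms(1-3) by (simp add: nth_butlast)
next
  case False
  then show ?thesis
    using assms(1,2,5) by (simp add: Suc_diff_le)
qed

lemma rho_eq_inf_embed:
  assumes len: "\<forall>i<m. length (v i) = d" and supp: "\<forall>i\<ge>m. supported_in d J (v i)"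
    and inf: "\<forall>j\<in>J. infinite {i. v i ! j \<noteq> 0}"
  shows "rho d v = inf_embed d J (vsum d (map v [0..<m]))"
proof (rule nth_equalityI)
  show "length (rho d v) = length (inf_embed d J (vsum d (map v [0..<m])))"
    by (simp add: rho_def)
next
  fix j assume "j < length (rho d v)"
  then have j: "j < d" by (simp add: rho_def)
  show "rho d v ! j = inf_embed d J (vsum d (map v [0..<m])) ! j"
  proof (cases "j \<in> J")
    case True
    then show ?thesis using j inf by (simp add: rho_def)
  next
    case False
    then have sub: "{i. v i ! j \<noteq> 0} \<subseteq> {..<m}"
      using supp j by (auto simp: supported_in_def not_less[symmetric])
    then have "(\<Sum>i\<in>{i. v i ! j \<noteq> 0}. v i ! j) = (\<Sum>i<m. v i ! j)"
      by (intro sum.mono_neutral_left) auto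
    also have "\<dots> = vsum d (map v [0..<m]) ! j"
      using len j by (simp add: nth_vsum)
    finally show ?thesis
      using False j finite_subset[OF sub] by (simp add: rho_def)
  qed
qed

lemma conc_omega_imp_LPBA_accepts:
  assumes wf: "PA_wf \<Sigma> d Q q0 \<Delta> F" and u: "u \<in> prefix_lang d q0 \<Delta> C J q"
    and \<beta>: "\<beta> \<in> omega_pow (loop_lang d \<Delta> F J q)"
  shows "LPBA_accepts d q0 \<Delta> F C (u \<frown> \<beta>)"
proof -
  obtain ps vs where ps: "length ps = Suc (length u)" "length vs = length u" "ps ! 0 = q0"
    "\<forall>i<length u. (ps ! i, u ! i, vs ! i, ps ! Suc i) \<in> \<Delta>" "ps ! length u = q"
    and sum: "inf_embed d J (vsum d vs) \<in> C"
    using u unfolding prefix_lang_def PA_accepts_def by auto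
  obtain idx where "idx_sequence idx" "\<forall>i. \<beta> [idx i \<rightarrow> idx (Suc i)] \<in> loop_lang d \<Delta> F J q"
    using \<beta> omega_pow_iff_idx_sequence by blast
  then obtain P V where P: "P 0 = q" "\<forall>n. (P n, \<beta> n, V n, P (Suc n)) \<in> \<Delta> \<and> supported_in d J (V n)"
    "infinite {n. P n \<in> F}" "\<forall>j\<in>J. infinite {n. V n ! j \<noteq> 0}"
    by (rule loop_segments_run)
  let ?p = "butlast ps \<frown> P" and ?v = "vs \<frown> V"
  have "?p 0 = q0"
    using ps(1,3,5) P(1) by (cases u) (auto simp: nth_butlast)
  moreover have "\<forall>n. (?p n, (u \<frown> \<beta>) n, ?v n, ?p (Suc n)) \<in> \<Delta>"
    using ps P by (intro allI run_conc) auto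
  moreover have "infinite {n. ?p n \<in> F}"
    using P(3) by (rule infinite_conc)
  moreover have "rho d ?v = inf_embed d J (vsum d vs)"
  proof -
    have "\<forall>i<length vs. length (?v i) = d"
      using ps(2,4) wf unfolding PA_wf_def by fastforce
    moreover have "\<forall>i\<ge>length vs. supported_in d J (?v i)"
      using P(2) by simp
    moreover have "\<forall>j\<in>J. infinite {i. ?v i ! j \<noteq> 0}"
      using P(4) infinite_conc[where R = "\<lambda>x. x ! j \<noteq> 0" for j] by blast
    moreover have "map ?v [0..<length vs] = vs"
      by (intro nth_equalityI) auto
    ultimately show ?thesis
      using rho_eq_inf_embed[of "length vs" ?v d J] by simp
  qed
  ultimately show ?thesis
    unfolding LPBA_accepts_def using sum by (intro exI[of _ ?p] exI[of _ ?v]) simp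
qed

lemma PA_accepts_run_prefix:
  assumes "p 0 = q0" and "\<forall>i<m. (p i, \<alpha> i, v i, p (Suc i)) \<in> \<Delta>" and "vsum d (map v [0..<m]) \<in> C"
  shows "PA_accepts d q0 \<Delta> {p m} C (prefix m \<alpha>)"
  unfolding PA_accepts_def using assms
  by (intro exI[of _ "map p [0..<Suc m]"] exI[of _ "map v [0..<m]"])
    (auto simp: subsequence_def nth_append simp del: upt_Suc)

lemma run_segment_in_loop_lang:
  assumes run: "\<forall>i. (p i, \<alpha> i, v i, p (Suc i)) \<in> \<Delta>" and "p a = q" and "p b = q"
    and supp: "\<forall>i\<in>{a..<b}. supported_in d J (v i)"
    and F: "\<exists>t\<in>{a..<b}. p t \<in> F" and J: "\<forall>j\<in>J. \<exists>t\<in>{a..<b}. v t ! j \<noteq> 0"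
  shows "\<alpha> [a \<rightarrow> b] \<in> loop_lang d \<Delta> F J q"
proof -
  let ?p = "\<lambda>i. p (a + i)" and ?v = "\<lambda>i. v (a + i)"
  have ab: "a \<le> b" using F by auto
  have "\<forall>i<b - a. (?p i, \<alpha> [a \<rightarrow> b] ! i, ?v i, ?p (Suc i)) \<in> \<Delta> \<and> supported_in d J (?v i)"
    using run supp by simp
  moreover have "\<exists>t<b - a. ?p t \<in> F"
  proof -
    obtain t where "t \<in> {a..<b}" "p t \<in> F" using F by blast
    then show ?thesis by (intro exI[of _ "t - a"]) auto
  qed
  moreover have "\<forall>j\<in>J. \<exists>t<b - a. ?v t ! j \<noteq> 0"
  proof
    fix j assume "j \<in> J"
    then obtain t where "t \<in> {a..<b}" "v t ! j \<noteq> 0" using J by blast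
    then show "\<exists>t<b - a. ?v t ! j \<noteq> 0" by (intro exI[of _ "t - a"]) auto
  qed
  ultimately show ?thesis
    unfolding loop_lang_def using ab assms(2,3) by (intro CollectI exI[of _ ?p] exI[of _ ?v]) simp
qed

lemma run_suffix_in_omega_pow_loop_lang:
  assumes run: "\<forall>i. (p i, \<alpha> i, v i, p (Suc i)) \<in> \<Delta>"
    and q: "infinite {i. p i = q}" "p a = q" and F: "infinite {i. p i \<in> F}"
    and J: "finite J" "\<forall>j\<in>J. infinite {i. v i ! j \<noteq> 0}" and supp: "\<forall>i\<ge>a. supported_in d J (v i)"
  shows "suffix a \<alpha> \<in> omega_pow (loop_lang d \<Delta> F J q)"
proof -
  let ?\<B> = "insert {i. p i \<in> F} ((\<lambda>j. {i. v i ! j \<noteq> 0}) ` J)"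
  obtain s where s0: "s 0 = a"
    and s: "\<forall>i. s i \<in> {i. p i = q} \<and> s i < s (Suc i) \<and> (\<forall>B\<in>?\<B>. \<exists>t\<in>B. s i \<le> t \<and> t < s (Suc i))"
    using infinite_segmentation[OF q(1), of ?\<B> a] F J q(2) by auto
  have a_le: "a \<le> s i" for i
  proof (induction i)
    case 0
    then show ?case using s0 by simp
  next
    case (Suc i)
    then show ?case using s[rule_format, of i] by simp
  qed
  define idx where "idx i = s i - a" for i
  have "idx_sequence idx"
    using s s0 a_le by (simp add: idx_sequence_def idx_def diff_less_mono)
  moreover have "(suffix a \<alpha>) [idx i \<rightarrow> idx (Suc i)] \<in> loop_lang d \<Delta> F J q" for i
  proof -
    have "(suffix a \<alpha>) [idx i \<rightarrow> idx (Suc i)] = \<alpha> [s i \<rightarrow> s (Suc i)]"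
      using a_le by (simp add: idx_def)
    also have "\<dots> \<in> loop_lang d \<Delta> F J q"
    proof (rule run_segment_in_loop_lang[OF run])
      show "p (s i) = q" "p (s (Suc i)) = q" using s by auto
      show "\<forall>t\<in>{s i..<s (Suc i)}. supported_in d J (v t)"
        using supp a_le[of i] by auto
      show "\<exists>t\<in>{s i..<s (Suc i)}. p t \<in> F" using s by fastforce
      show "\<forall>j\<in>J. \<exists>t\<in>{s i..<s (Suc i)}. v t ! j \<noteq> 0" using s by fastforce
    qed
    finally show ?thesis .
  qed
  ultimately show ?thesis
    using omega_pow_iff_idx_sequence by blast
qed

lemma eventually_supported_in_recurrent:
  fixes v :: "nat \<Rightarrow> nat list"
  shows "\<exists>N. \<forall>i\<ge>N. supported_in d {j. j < d \<and> infinite {i. v i ! j \<noteq> 0}} (v i)"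
proof -
  let ?U = "\<Union>j\<in>{j. j < d \<and> finite {i. v i ! j \<noteq> 0}}. {i. v i ! j \<noteq> 0}"
  have "finite {j. j < d \<and> finite {i. v i ! j \<noteq> 0}}" by simp
  then have "finite ?U" by (rule finite_UN_I) simp
  then obtain N where N: "?U \<subseteq> {..<N}"
    using finite_nat_bounded by blast
  have "supported_in d {j. j < d \<and> infinite {i. v i ! j \<noteq> 0}} (v i)" if "N \<le> i" for i
    unfolding supported_in_def using N that by auto
  then show ?thesis by blast
qed

lemma LPBA_accepts_decompose:
  assumes wf: "PA_wf \<Sigma> d Q q0 \<Delta> F" and acc: "LPBA_accepts d q0 \<Delta> F C \<alpha>"
  obtains J q where "J \<subseteq> {..<d}" and "q \<in> Q"
    and "\<alpha> \<in> conc_omega (prefix_lang d q0 \<Delta> C J q) (loop_lang d \<Delta> F J q)"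
proof -
  obtain p v where p0: "p 0 = q0" and run: "\<forall>i. (p i, \<alpha> i, v i, p (Suc i)) \<in> \<Delta>"
    and F: "infinite {i. p i \<in> F}" and C: "rho d v \<in> C"
    using acc unfolding LPBA_accepts_def by blast
  have \<Delta>: "finite Q" "q0 \<in> Q" "\<forall>(p, a, v, q) \<in> \<Delta>. p \<in> Q \<and> length v = d \<and> q \<in> Q"
    using wf unfolding PA_wf_def by auto
  have pQ: "p i \<in> Q" for i
    using p0 run \<Delta>(2,3) by (induction i) auto
  have len: "length (v i) = d" for i
    using run \<Delta>(3) by blast
  define J where "J = {j. j < d \<and> infinite {i. v i ! j \<noteq> 0}}"
  obtain N where N: "\<forall>i\<ge>N. supported_in d J (v i)"
    using eventually_supported_in_recurrent unfolding J_def by blast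
  obtain q where q: "q \<in> Q" "infinite {i. p i = q}"
  proof (rule inf_img_fin_domE[of p UNIV])
    show "finite (range p)" using pQ \<Delta>(1) by (metis finite_subset image_subsetI)
  qed (auto simp: vimage_def intro: that pQ)
  obtain a where a: "N \<le> a" "p a = q"
    using q(2) unfolding infinite_nat_iff_unbounded_le by blast
  have "rho d v = inf_embed d J (vsum d (map v [0..<a]))"
    using N a(1) len by (intro rho_eq_inf_embed) (auto simp: J_def)
  then have "prefix a \<alpha> \<in> prefix_lang d q0 \<Delta> C J q"
    unfolding prefix_lang_def using p0 run C len a(2) PA_accepts_run_prefix[of p q0 a \<alpha> v \<Delta> d]
    by (simp add: length_vsum)
  moreover have "suffix a \<alpha> \<in> omega_pow (loop_lang d \<Delta> F J q)"
    using run q(2) a F N by (intro run_suffix_in_omega_pow_loop_lang) (auto simp: J_def)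
  ultimately have "\<alpha> \<in> conc_omega (prefix_lang d q0 \<Delta> C J q) (loop_lang d \<Delta> F J q)"
    unfolding mem_conc_omega_iff using prefix_suffix by blast
  moreover have "J \<subseteq> {..<d}" by (auto simp: J_def)
  ultimately show ?thesis using q(1) that by blast
qed

lemma LPBA_language_eq_UN:
  assumes wf: "PA_wf \<Sigma> d Q q0 \<Delta> F"
  shows "{\<alpha>. LPBA_accepts d q0 \<Delta> F C \<alpha>} =
    (\<Union>(J, q)\<in>Pow {..<d} \<times> Q. conc_omega (prefix_lang d q0 \<Delta> C J q) (loop_lang d \<Delta> F J q))"
    (is "_ = ?R")
proof (intro set_eqI iffI)
  fix \<alpha> assume "\<alpha> \<in> {\<alpha>. LPBA_accepts d q0 \<Delta> F C \<alpha>}"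
  then obtain J q where "J \<subseteq> {..<d}" "q \<in> Q"
    "\<alpha> \<in> conc_omega (prefix_lang d q0 \<Delta> C J q) (loop_lang d \<Delta> F J q)"
    using LPBA_accepts_decompose[OF wf] by blast
  then show "\<alpha> \<in> ?R" by blast
next
  fix \<alpha> assume "\<alpha> \<in> ?R"
  then obtain J q where "\<alpha> \<in> conc_omega (prefix_lang d q0 \<Delta> C J q) (loop_lang d \<Delta> F J q)"
    by blast
  then obtain u \<beta> where "\<alpha> = u \<frown> \<beta>" and "u \<in> prefix_lang d q0 \<Delta> C J q"
    and "\<beta> \<in> omega_pow (loop_lang d \<Delta> F J q)"
    unfolding mem_conc_omega_iff by blast
  then show "\<alpha> \<in> {\<alpha>. LPBA_accepts d q0 \<Delta> F C \<alpha>}"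
    using conc_omega_imp_LPBA_accepts[OF wf] by blast
qed

theorem lemma7:
  fixes \<Sigma> :: "'a set" and L :: "'a iword set"
  assumes "finite \<Sigma>"
    and "L \<subseteq> iwords \<Sigma>"
    and "LPBA_recognizable \<Sigma> L"
  shows "\<exists>(n::nat) (U :: nat \<Rightarrow> 'a list set) (V :: nat \<Rightarrow> 'a list set).
           (\<forall>i < n. parikh_recognizable \<Sigma> (U i) \<and> regular \<Sigma> (V i)) \<and>
           L = (\<Union>i < n. conc_omega (U i) (V i))"
proof -
  obtain d Q q0 \<Delta> F C where wf: "PA_wf \<Sigma> d Q q0 \<Delta> F" and C: "semilinear d C"
    and L: "L = {\<alpha>. LPBA_accepts d q0 \<Delta> F C \<alpha>}"
    using assms(3) unfolding LPBA_recognizable_def by blast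
  have "finite (Pow {..<d} \<times> Q)"
    using wf by (simp add: PA_wf_def)
  then obtain n and f :: "nat \<Rightarrow> nat set \<times> nat" where f: "Pow {..<d} \<times> Q = f ` {..<n}"
    using finite_imp_nat_seg_image_inj_on by (metis lessThan_def)
  define U where "U i = prefix_lang d q0 \<Delta> C (fst (f i)) (snd (f i))" for i
  define V where "V i = loop_lang d \<Delta> F (fst (f i)) (snd (f i))" for i
  have "parikh_recognizable \<Sigma> (U i) \<and> regular \<Sigma> (V i)" if "i < n" for i
  proof -
    have "f i \<in> Pow {..<d} \<times> Q"
      using f that by blast
    then have "fst (f i) \<subseteq> {..<d}" "snd (f i) \<in> Q"
      by (simp_all add: mem_Times_iff)
    then show ?thesis
      unfolding U_def V_def
      using prefix_lang_parikh_recognizable[OF wf C] loop_lang_regular[OF wf] by blast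
  qed
  moreover have "L = (\<Union>i<n. conc_omega (U i) (V i))"
    unfolding L LPBA_language_eq_UN[OF wf] f by (simp add: U_def V_def split_def)
  ultimately show ?thesis by blast
qed

end
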